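(* Every W-cone is a W-state graph.
   Context: Graphs may have parallel edges but no loops. A half-edge $2$-colouring $c$ of $G$ assigns to each pair $(e,w)$ with $w$ an endpoint of edge $e$ a colour in $\{0,1\}$ (0 = blue, 1 = red). An edge $e=uv$ is bichromatic if $c(e,u)\neq c(e,v)$ and monochromatic otherwise; $E_b(G)$, $E_m(G)$ denote the bichromatic and monochromatic edge sets; standing convention: monochromatic edges are blue at both ends. A graph is matching-covered if every edge lies in some perfect matching. A W-state graph is a half-edge $2$-coloured matching-covered graph $(G,c)$ in which every perfect matching contains exactly one bichromatic edge, and every vertex $v$ is incident with an edge $e$ with $c(e,v)=1$. A W-cone is a half-edge $2$-coloured matching-covered graph $(G,c)$ containing a vertex $v$ adjacent to all other vertices (the apex) such that the set of edges incident with $v$ equals $E_b(G)$, $E(G-v)=E_m(G)$, and every vertex $u$ is incident with an edge $e$ with $c(e,u)=1$. *)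

theory Defs
  imports Main
begin

text \<open>Parallel edges are allowed since distinct edges may have equal endpoint sets.\<close>
definition multigraph :: "'v set \<Rightarrow> 'e set \<Rightarrow> ('e \<Rightarrow> 'v set) \<Rightarrow> bool" where
  "multigraph V E ends \<longleftrightarrow> finite V \<and> finite E \<and>
     (\<forall>e\<in>E. ends e \<subseteq> V \<and> card (ends e) = 2)"

text \<open>Half-edge 2-colouring: c e w is the colour of the half-edge (e,w);
  False = 0 = blue, True = 1 = red. Only values with w an endpoint of e matter.\<close>

definition bichromatic :: "('e \<Rightarrow> 'v set) \<Rightarrow> ('e \<Rightarrow> 'v \<Rightarrow> bool) \<Rightarrow> 'e \<Rightarrow> bool" where
  "bichromatic ends c e \<longleftrightarrow> (\<exists>u\<in>ends e. \<exists>w\<in>ends e. c e u \<noteq> c e w)"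

definition bichromatic_edges :: "'e set \<Rightarrow> ('e \<Rightarrow> 'v set) \<Rightarrow> ('e \<Rightarrow> 'v \<Rightarrow> bool) \<Rightarrow> 'e set" where
  "bichromatic_edges E ends c = {e\<in>E. bichromatic ends c e}"

definition monochromatic_edges :: "'e set \<Rightarrow> ('e \<Rightarrow> 'v set) \<Rightarrow> ('e \<Rightarrow> 'v \<Rightarrow> bool) \<Rightarrow> 'e set" where
  "monochromatic_edges E ends c = {e\<in>E. \<not> bichromatic ends c e}"

definition mono_blue :: "'e set \<Rightarrow> ('e \<Rightarrow> 'v set) \<Rightarrow> ('e \<Rightarrow> 'v \<Rightarrow> bool) \<Rightarrow> bool" where
  "mono_blue E ends c \<longleftrightarrow>
     (\<forall>e\<in>monochromatic_edges E ends c. \<forall>w\<in>ends e. \<not> c e w)"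

definition perfect_matching :: "'v set \<Rightarrow> 'e set \<Rightarrow> ('e \<Rightarrow> 'v set) \<Rightarrow> 'e set \<Rightarrow> bool" where
  "perfect_matching V E ends M \<longleftrightarrow> M \<subseteq> E \<and>
     (\<forall>v\<in>V. \<exists>!e. e \<in> M \<and> v \<in> ends e)"

definition matching_covered :: "'v set \<Rightarrow> 'e set \<Rightarrow> ('e \<Rightarrow> 'v set) \<Rightarrow> bool" where
  "matching_covered V E ends \<longleftrightarrow>
     (\<forall>e\<in>E. \<exists>M. perfect_matching V E ends M \<and> e \<in> M)"

definition has_red_halfedge ::
  "'v set \<Rightarrow> 'e set \<Rightarrow> ('e \<Rightarrow> 'v set) \<Rightarrow> ('e \<Rightarrow> 'v \<Rightarrow> bool) \<Rightarrow> bool" where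
  "has_red_halfedge V E ends c \<longleftrightarrow> (\<forall>u\<in>V. \<exists>e\<in>E. u \<in> ends e \<and> c e u)"

definition W_state_graph ::
  "'v set \<Rightarrow> 'e set \<Rightarrow> ('e \<Rightarrow> 'v set) \<Rightarrow> ('e \<Rightarrow> 'v \<Rightarrow> bool) \<Rightarrow> bool" where
  "W_state_graph V E ends c \<longleftrightarrow>
     matching_covered V E ends \<and>
     (\<forall>M. perfect_matching V E ends M \<longrightarrow> card (M \<inter> bichromatic_edges E ends c) = 1) \<and>
     has_red_halfedge V E ends c"

definition W_cone ::
  "'v set \<Rightarrow> 'e set \<Rightarrow> ('e \<Rightarrow> 'v set) \<Rightarrow> ('e \<Rightarrow> 'v \<Rightarrow> bool) \<Rightarrow> bool" where
  "W_cone V E ends c \<longleftrightarrow>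
     matching_covered V E ends \<and>
     (\<exists>v\<in>V.
        (\<forall>u\<in>V - {v}. \<exists>e\<in>E. ends e = {v, u}) \<and>
        {e\<in>E. v \<in> ends e} = bichromatic_edges E ends c \<and>
        {e\<in>E. v \<notin> ends e} = monochromatic_edges E ends c) \<and>
     has_red_halfedge V E ends c"

end

theory Submission
  imports Defs
begin

text \<open>A perfect matching covers the apex by exactly one edge, and in a W-cone the edges
  at the apex are precisely the bichromatic ones. Neither the multigraph axioms nor the
  colour convention for monochromatic edges is needed.\<close>

lemma card_perfect_matching_inter_incident:
  assumes "perfect_matching V E ends M" and "v \<in> V"
  shows "card (M \<inter> {f\<in>E. v \<in> ends f}) = 1"
proof -
  from assms have "M \<subseteq> E" and "\<exists>!e. e \<in> M \<and> v \<in> ends e"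
    unfolding perfect_matching_def by auto
  then obtain e where "e \<in> M" "v \<in> ends e"
    and "\<And>f. f \<in> M \<Longrightarrow> v \<in> ends f \<Longrightarrow> f = e"
    by blast
  with \<open>M \<subseteq> E\<close> have "M \<inter> {f\<in>E. v \<in> ends f} = {e}"
    by blast
  then show ?thesis by simp
qed

theorem mainTheorem7:
  fixes V :: "'v set" and E :: "'e set" and ends :: "'e \<Rightarrow> 'v set"
    and c :: "'e \<Rightarrow> 'v \<Rightarrow> bool"
  assumes "multigraph V E ends"
    and "mono_blue E ends c"
    and "W_cone V E ends c"
  shows "W_state_graph V E ends c"
proof -
  from assms(3) have covered: "matching_covered V E ends" and red: "has_red_halfedge V E ends c"
    unfolding W_cone_def by auto
  from assms(3) obtain apex where apex: "apex \<in> V"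
    and apex_edges: "{e\<in>E. apex \<in> ends e} = bichromatic_edges E ends c"
    unfolding W_cone_def by blast
  have "card (M \<inter> bichromatic_edges E ends c) = 1"
    if "perfect_matching V E ends M" for M
    using card_perfect_matching_inter_incident[OF that apex] by (simp only: apex_edges)
  with covered red show ?thesis
    unfolding W_state_graph_def by blast
qed

end
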